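(* Consider ${\rm CHC}_R(\mathbf k,\mathbf n,\lambda)$ under regime (A1), and let $$(\hat I_1,\dots,\hat I_d)\in\arg\max_{I_i\subseteq[n_i],\,|I_i|=k_i}\ \sum_{i_1\in I_1}\cdots\sum_{i_d\in I_d}\mathcal Y_{[i_1,\dots,i_d]}.$$ There exists $C_0>0$ (depending only on $d$) such that if $$\lambda\ge C_0\sqrt{\frac{\sum_{i=1}^d\log(n_i-k_i)}{\min_{1\le i\le d}\prod_{z\ne i}k_z}},$$ then $(\hat I_1,\dots,\hat I_d)=S(\mathcal X)$ with probability at least $1-C\sum_{i=1}^d(n_i-k_i)^{-c}$ for some constants $c,C>0$, uniformly over $\mathcal X\in\mathscr X_{\rm CHC}(\mathbf k,\mathbf n,\lambda)$. Moreover, under regime (A2), this estimator achieves reliable recovery (risk $\to0$) whenever $\beta<(d-1)\alpha/2$.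
   Context: Model: $\mathcal Y=\mathcal X+\mathcal Z\in\mathbb R^{n_1\times\cdots\times n_d}$, $\mathcal Z$ with i.i.d. $N(0,1)$ entries. $\mathscr X_{\rm CHC}(\mathbf k,\mathbf n,\lambda)=\{\lambda'\mathbf 1_{I_1}\circ\cdots\circ\mathbf 1_{I_d}: I_i\subseteq[n_i],|I_i|=k_i,\lambda'\ge\lambda\}$, where $\mathbf 1_I$ is the indicator vector of $I$; $S(\mathcal X)=(I_1,\dots,I_d)$. Regime (A1): for all $i$, $n_i\to\infty$, $k_i\to\infty$, $k_i/n_i\to0$. Regime (A2): fixed $\alpha\in[0,1]$, $\beta\in\mathbb R$; $n\to\infty$, $n_1=\dots=n_d$ with $\log n_i/\log n\to1$, $k_i=k$ with $\log k/\log n\to\alpha$, $\log(1/\lambda)/\log n\to\beta$. *)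

theory Defs
  imports "HOL-Probability.Probability"
begin

text \<open>Order-d tensors of size n 0 x ... x n (d-1): multi-indices are extensional
  functions i :: nat => nat with i j < n j for j < d.\<close>
definition tidx :: "nat \<Rightarrow> (nat \<Rightarrow> nat) \<Rightarrow> (nat \<Rightarrow> nat) set" where
  "tidx d n = PiE {..<d} (\<lambda>j. {..<n j})"

definition supports :: "nat \<Rightarrow> (nat \<Rightarrow> nat) \<Rightarrow> (nat \<Rightarrow> nat) \<Rightarrow> (nat \<Rightarrow> nat set) set" where
  "supports d n k = PiE {..<d} (\<lambda>j. {A. A \<subseteq> {..<n j} \<and> card A = k j})"

definition chc_tensor :: "nat \<Rightarrow> real \<Rightarrow> (nat \<Rightarrow> nat set) \<Rightarrow> (nat \<Rightarrow> nat) \<Rightarrow> real" where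
  "chc_tensor d lam I = (\<lambda>i. lam * (\<Prod>j<d. indicator (I j) (i j)))"

definition noise :: "nat \<Rightarrow> (nat \<Rightarrow> nat) \<Rightarrow> ((nat \<Rightarrow> nat) \<Rightarrow> real) measure" where
  "noise d n = PiM (tidx d n) (\<lambda>_. density lborel std_normal_density)"

definition score :: "nat \<Rightarrow> ((nat \<Rightarrow> nat) \<Rightarrow> real) \<Rightarrow> (nat \<Rightarrow> nat set) \<Rightarrow> real" where
  "score d Y I = (\<Sum>i\<in>PiE {..<d} I. Y i)"

text \<open>Event that every maximiser of the score (over all feasible supports), computed
  from Y = X + Z with X = chc_tensor d lam I, equals S(X) = I.\<close>
definition recovery_event ::
  "nat \<Rightarrow> (nat \<Rightarrow> nat) \<Rightarrow> (nat \<Rightarrow> nat) \<Rightarrow> real \<Rightarrow> (nat \<Rightarrow> nat set) \<Rightarrow> ((nat \<Rightarrow> nat) \<Rightarrow> real) set" where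
  "recovery_event d n k lam I =
     {Z \<in> space (noise d n). \<forall>J\<in>supports d n k. J \<noteq> I \<longrightarrow>
        score d (\<lambda>i. chc_tensor d lam I i + Z i) J < score d (\<lambda>i. chc_tensor d lam I i + Z i) I}"

definition success_prob :: "nat \<Rightarrow> (nat \<Rightarrow> nat) \<Rightarrow> (nat \<Rightarrow> nat) \<Rightarrow> real \<Rightarrow> (nat \<Rightarrow> nat set) \<Rightarrow> real" where
  "success_prob d n k lam I = measure (noise d n) (recovery_event d n k lam I)"

text \<open>Worst-case risk over the class CHC(k,n,lam): sup over X of P(estimate \<noteq> S(X)).\<close>
definition chc_risk :: "nat \<Rightarrow> (nat \<Rightarrow> nat) \<Rightarrow> (nat \<Rightarrow> nat) \<Rightarrow> real \<Rightarrow> real" where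
  "chc_risk d n k lam =
     (SUP p\<in>{(I, l). I \<in> supports d n k \<and> lam \<le> l}. 1 - success_prob d n k (snd p) (fst p))"

end

theory Submission
  imports Defs "HOL-Real_Asymp.Real_Asymp"
begin

text \<open>For a competitor support J, the score of J minus that of the true support I is a centred
  Gaussian of variance 2D shifted by -\<lambda>D, where D is the number of entries of the box of I
  outside the box of J, so by a Chernoff bound J wins with probability at most exp(-\<lambda>^2 D/4).
  Since D \<ge> |I_j - J_j| \<Prod>_{z \<noteq> j} k_z for every j, the union bound over all J factorises
  over the coordinates. Each factor is at most (1 + y)^n_j, where y = exp(-\<lambda>^2 M/(8d)) and
  M = min_j \<Prod>_{z \<noteq> j} k_z, because A \<mapsto> I_j \<triangle> A is injective with |I_j \<triangle> A| = 2|I_j - A|.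
  Above the threshold y \<le> (n_j - k_j)^-2, so the failure probability is at most
  \<Prod>_j (1 + y)^n_j - 1 = O(\<Sum>_j (n_j - k_j)^-1). In regime (A2) the threshold
  \<lambda>^2 k^(d-1) \<ge> C log n holds eventually because (d - 1)\<alpha> > 2\<beta>.\<close>

section \<open>Gaussian linear forms\<close>

abbreviation std_normal :: "real measure" where
  "std_normal \<equiv> density lborel std_normal_density"

lemma nn_integral_exp_std_normal:
  "(\<integral>\<^sup>+x. ennreal (exp (t * x)) \<partial>std_normal) = ennreal (exp (t\<^sup>2 / 2))"
proof -
  have shift: "ennreal (std_normal_density x) * ennreal (exp (t * x))
      = ennreal (exp (t\<^sup>2 / 2)) * ennreal (normal_density t 1 x)" for x
  proof -
    have "exp (t * x) * exp (- x\<^sup>2 / 2) = exp (t\<^sup>2 / 2) * exp (- (x - t)\<^sup>2 / 2)"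
      unfolding exp_add[symmetric]
      by (rule arg_cong[where f = exp]) (simp add: power2_eq_square field_simps)
    then show ?thesis
      unfolding normal_density_def by (simp add: mult.commute ennreal_mult'[symmetric])
  qed
  interpret normal: prob_space "density lborel (normal_density t 1)"
    by (rule prob_space_normal_density) simp
  have "(\<integral>\<^sup>+x. ennreal (normal_density t 1 x) \<partial>lborel) = 1"
    using normal.emeasure_space_1 by (subst (asm) emeasure_density) auto
  then show ?thesis
    by (simp add: nn_integral_density shift nn_integral_cmult)
qed

lemma borel_measurable_component_std_normal:
  assumes "i \<in> T"
  shows "(\<lambda>Z. Z i) \<in> borel_measurable (PiM T (\<lambda>_. std_normal))"
proof -
  have "measurable (PiM T (\<lambda>_. std_normal)) std_normal = borel_measurable (PiM T (\<lambda>_. std_normal))"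
    by (rule measurable_cong_sets) simp_all
  then show ?thesis
    using measurable_component_singleton[OF assms, of "\<lambda>_. std_normal"] by simp
qed

lemma nn_integral_exp_linear_form_std_normal:
  assumes "finite T"
  shows "(\<integral>\<^sup>+Z. ennreal (exp (s * (\<Sum>i\<in>T. b i * Z i))) \<partial>PiM T (\<lambda>_. std_normal))
       = ennreal (exp (s\<^sup>2 / 2 * (\<Sum>i\<in>T. (b i)\<^sup>2)))"
proof -
  interpret product_sigma_finite "\<lambda>_. std_normal"
    unfolding product_sigma_finite_def
    using prob_space_imp_sigma_finite[OF prob_space_normal_density] by simp
  have "ennreal (exp (s * (\<Sum>i\<in>T. b i * Z i))) = (\<Prod>i\<in>T. ennreal (exp (s * b i * Z i)))" for Z
    using assms by (simp add: sum_distrib_left exp_sum mult.assoc prod_ennreal)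
  then have "(\<integral>\<^sup>+Z. ennreal (exp (s * (\<Sum>i\<in>T. b i * Z i))) \<partial>PiM T (\<lambda>_. std_normal))
      = (\<integral>\<^sup>+Z. (\<Prod>i\<in>T. ennreal (exp (s * b i * Z i))) \<partial>PiM T (\<lambda>_. std_normal))"
    by simp
  also have "\<dots> = (\<Prod>i\<in>T. \<integral>\<^sup>+x. ennreal (exp (s * b i * x)) \<partial>std_normal)"
    using assms by (intro product_nn_integral_prod) auto
  also have "\<dots> = ennreal (\<Prod>i\<in>T. exp ((s * b i)\<^sup>2 / 2))"
    by (simp add: nn_integral_exp_std_normal prod_ennreal)
  also have "(\<Prod>i\<in>T. exp ((s * b i)\<^sup>2 / 2)) = exp (s\<^sup>2 / 2 * (\<Sum>i\<in>T. (b i)\<^sup>2))"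
    using assms by (simp add: exp_sum sum_distrib_left power_mult_distrib)
  finally show ?thesis .
qed

lemma measure_linear_form_ge_std_normal:
  assumes "finite T" "0 \<le> s"
  shows "measure (PiM T (\<lambda>_. std_normal)) {Z \<in> space (PiM T (\<lambda>_. std_normal)). t \<le> (\<Sum>i\<in>T. b i * Z i)}
       \<le> exp (s\<^sup>2 / 2 * (\<Sum>i\<in>T. (b i)\<^sup>2) - s * t)"
proof -
  let ?P = "PiM T (\<lambda>_. std_normal)" and ?g = "\<lambda>Z. \<Sum>i\<in>T. b i * Z i"
  let ?A = "{Z \<in> space ?P. t \<le> ?g Z}"
  have [measurable]: "?g \<in> borel_measurable ?P"
    by (intro borel_measurable_sum borel_measurable_times borel_measurable_const
        borel_measurable_component_std_normal)
  have markov: "indicator ?A Z \<le> ennreal (exp (- (s * t))) * ennreal (exp (s * ?g Z))" for Z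
  proof (cases "Z \<in> ?A")
    case True
    then have "s * t \<le> s * ?g Z" using assms(2) by (simp add: mult_left_mono)
    then have "1 \<le> exp (- (s * t)) * exp (s * ?g Z)" by (simp add: exp_add[symmetric])
    then show ?thesis using True by (simp add: ennreal_mult'[symmetric])
  qed simp
  have "emeasure ?P ?A = (\<integral>\<^sup>+Z. indicator ?A Z \<partial>?P)"
    by simp
  also have "\<dots> \<le> (\<integral>\<^sup>+Z. ennreal (exp (- (s * t))) * ennreal (exp (s * ?g Z)) \<partial>?P)"
    by (intro nn_integral_mono markov)
  also have "\<dots> = ennreal (exp (- (s * t))) * (\<integral>\<^sup>+Z. ennreal (exp (s * ?g Z)) \<partial>?P)"
    by (subst nn_integral_cmult) auto
  also have "\<dots> = ennreal (exp (s\<^sup>2 / 2 * (\<Sum>i\<in>T. (b i)\<^sup>2) - s * t))"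
    using assms(1) by (simp add: nn_integral_exp_linear_form_std_normal
        ennreal_mult'[symmetric] exp_add[symmetric])
  finally show ?thesis by (simp add: measure_def enn2real_leI)
qed

lemma prob_space_noise: "prob_space (noise d n)"
  unfolding noise_def by (intro prob_space_PiM prob_space_normal_density) simp

section \<open>Counting competitor supports\<close>

lemma sum_power_card_diff_le:
  fixes y :: real
  assumes "I \<subseteq> {..<n}" "0 \<le> y"
  shows "(\<Sum>A\<in>{A. A \<subseteq> {..<n} \<and> card A = card I}. y ^ (2 * card (I - A))) \<le> (1 + y) ^ n"
proof -
  let ?K = "{A. A \<subseteq> {..<n} \<and> card A = card I}"
  define f where "f A = (I - A) \<union> (A - I)" for A :: "nat set"
  have finI: "finite I" using assms(1) finite_subset by blast
  have card_f: "card (f A) = 2 * card (I - A)" if "A \<in> ?K" for A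
  proof -
    have finA: "finite A" using that finite_subset by auto
    have "card A = card (A \<inter> I) + card (A - I)" "card I = card (I \<inter> A) + card (I - A)"
      using card_Int_Diff finA finI by blast+
    then have "card (A - I) = card (I - A)" using that by (simp add: Int_commute)
    moreover have "card (f A) = card (I - A) + card (A - I)"
      unfolding f_def using finA finI by (intro card_Un_disjoint) auto
    ultimately show ?thesis by simp
  qed
  have "inj_on f ?K"
  proof (rule inj_onI)
    fix A B assume "f A = f B"
    moreover have "A = (I - f A) \<union> (f A - I)" for A unfolding f_def by auto
    ultimately show "A = B" by metis
  qed
  then have "(\<Sum>A\<in>?K. y ^ (2 * card (I - A))) = (\<Sum>T\<in>f ` ?K. y ^ card T)"
    by (simp add: sum.reindex card_f)
  also have "\<dots> \<le> (\<Sum>T\<in>Pow {..<n}. y ^ card T)"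
    using assms by (intro sum_mono2) (auto simp: f_def)
  also have "\<dots> = (1 + y) ^ n"
    using prod_add[of "{..<n}" "\<lambda>_. y" "\<lambda>_. 1"] by (simp add: add.commute)
  finally show ?thesis .
qed

lemma finite_tidx: "finite (tidx d n)"
  by (simp add: tidx_def finite_PiE)

lemma finite_supports: "finite (supports d n k)"
  unfolding supports_def by (intro finite_PiE) (auto intro: finite_subset[of _ "Pow {..<n _}"])

lemma supportsD:
  assumes "I \<in> supports d n k"
  shows "PiE {..<d} I \<subseteq> tidx d n" "\<And>j. j < d \<Longrightarrow> card (I j) = k j"
    "\<And>j. j < d \<Longrightarrow> I j \<subseteq> {..<n j}"
  using assms by (auto simp: supports_def tidx_def PiE_iff)

lemma card_PiE_supports:
  assumes "I \<in> supports d n k"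
  shows "card (PiE {..<d} I) = (\<Prod>j<d. k j)"
  using supportsD[OF assms] by (simp add: card_PiE)

lemma sum_supports_prod_power_le:
  fixes y :: real
  assumes "I \<in> supports d n k" "0 \<le> y"
  shows "(\<Sum>J\<in>supports d n k. \<Prod>j<d. y ^ (2 * card (I j - J j))) \<le> (\<Prod>j<d. (1 + y) ^ n j)"
proof -
  have "(\<Sum>J\<in>supports d n k. \<Prod>j<d. y ^ (2 * card (I j - J j)))
      = (\<Prod>j<d. \<Sum>A\<in>{A. A \<subseteq> {..<n j} \<and> card A = k j}. y ^ (2 * card (I j - A)))"
    unfolding supports_def
    by (rule prod_sum_PiE[symmetric]) (auto intro: finite_subset[of _ "Pow {..<n _}"])
  also have "\<dots> \<le> (\<Prod>j<d. (1 + y) ^ n j)"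
  proof (rule prod_mono)
    fix j assume "j \<in> {..<d}"
    then have "card (I j) = k j" "I j \<subseteq> {..<n j}"
      using supportsD(2,3)[OF assms(1)] by auto
    then show "0 \<le> (\<Sum>A\<in>{A. A \<subseteq> {..<n j} \<and> card A = k j}. y ^ (2 * card (I j - A))) \<and>
        (\<Sum>A\<in>{A. A \<subseteq> {..<n j} \<and> card A = k j}. y ^ (2 * card (I j - A))) \<le> (1 + y) ^ n j"
      using sum_power_card_diff_le[of "I j" "n j" y] assms(2) by (auto intro: sum_nonneg)
  qed
  finally show ?thesis .
qed

lemma card_box_diff_ge:
  assumes I: "I \<in> supports d n k" and J: "J \<in> supports d n k" and j: "j < d"
  shows "real (card (I j - J j)) * (\<Prod>z\<in>{..<d} - {j}. real (k z))
       \<le> real (card (PiE {..<d} I - PiE {..<d} J))"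
proof -
  let ?I' = "I(j := I j - J j)"
  have "PiE {..<d} ?I' \<subseteq> PiE {..<d} I - PiE {..<d} J"
  proof
    fix x assume x: "x \<in> PiE {..<d} ?I'"
    then have "x j \<in> I j - J j" using j by (metis PiE_mem fun_upd_same lessThan_iff)
    then show "x \<in> PiE {..<d} I - PiE {..<d} J"
      using x j by (auto simp: PiE_iff split: if_splits)
  qed
  moreover have "finite (PiE {..<d} I)"
    using supportsD(1)[OF I] finite_tidx finite_subset by blast
  ultimately have "card (PiE {..<d} ?I') \<le> card (PiE {..<d} I - PiE {..<d} J)"
    by (intro card_mono) auto
  moreover have "card (PiE {..<d} ?I') = card (I j - J j) * (\<Prod>z\<in>{..<d} - {j}. k z)"
  proof -
    have "card (PiE {..<d} ?I') = card (?I' j) * (\<Prod>z\<in>{..<d} - {j}. card (?I' z))"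
      using j by (simp add: card_PiE prod.remove)
    also have "(\<Prod>z\<in>{..<d} - {j}. card (?I' z)) = (\<Prod>z\<in>{..<d} - {j}. k z)"
      using supportsD(2)[OF I] by (intro prod.cong) auto
    finally show ?thesis by (simp only: fun_upd_same)
  qed
  ultimately show ?thesis
    by (metis of_nat_le_iff of_nat_mult of_nat_prod)
qed

section \<open>The score of a support\<close>

lemma prod_indicator_PiE:
  fixes d :: nat
  assumes "i \<in> extensional {..<d}"
  shows "(\<Prod>j<d. indicator (I j) (i j) :: real) = indicator (PiE {..<d} I) i"
proof (cases "i \<in> PiE {..<d} I")
  case False
  then obtain j where "j < d" "i j \<notin> I j" using assms by (auto simp: PiE_iff)
  then have "\<exists>j\<in>{..<d}. indicator (I j) (i j) = (0::real)"
    by (intro bexI[of _ j]) simp_all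
  then have "(\<Prod>j<d. indicator (I j) (i j) :: real) = 0"
    by (rule prod_zero[OF finite_lessThan])
  then show ?thesis using False by simp
qed (simp add: PiE_iff)

lemma score_signal_plus_noise:
  assumes K: "PiE {..<d} K \<subseteq> tidx d n"
  shows "score d (\<lambda>i. chc_tensor d lam I i + Z i) K
       = lam * real (card (PiE {..<d} K \<inter> PiE {..<d} I))
         + (\<Sum>i\<in>tidx d n. indicator (PiE {..<d} K) i * Z i)"
proof -
  have fin: "finite (PiE {..<d} K)"
    using K finite_tidx finite_subset by blast
  have "chc_tensor d lam I i = indicator (PiE {..<d} I) i * lam" if "i \<in> PiE {..<d} K" for i
    using that K unfolding chc_tensor_def
    by (subst prod_indicator_PiE) (auto simp: tidx_def PiE_iff)
  then have "(\<Sum>i\<in>PiE {..<d} K. chc_tensor d lam I i)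
      = (\<Sum>i\<in>PiE {..<d} K. indicator (PiE {..<d} I) i * lam)"
    by (rule sum.cong[OF refl])
  also have "\<dots> = (\<Sum>i\<in>PiE {..<d} K. if i \<in> PiE {..<d} I then lam else 0)"
    by (rule sum.cong) (auto simp: indicator_def)
  also have "\<dots> = lam * real (card (PiE {..<d} K \<inter> PiE {..<d} I))"
    using sum.inter_restrict[OF fin, where g = "\<lambda>_. lam" and B = "PiE {..<d} I"]
    by (simp add: mult.commute)
  finally have "(\<Sum>i\<in>PiE {..<d} K. chc_tensor d lam I i)
      = lam * real (card (PiE {..<d} K \<inter> PiE {..<d} I))" .
  moreover have "(\<Sum>i\<in>tidx d n. indicator (PiE {..<d} K) i * Z i) = (\<Sum>i\<in>PiE {..<d} K. Z i)"
  proof -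
    have "(\<Sum>i\<in>tidx d n. indicator (PiE {..<d} K) i * Z i)
        = (\<Sum>i\<in>tidx d n. if i \<in> PiE {..<d} K then Z i else 0)"
      by (rule sum.cong) (auto simp: indicator_def)
    then show ?thesis
      using sum.inter_restrict[OF finite_tidx[of d n], where g = Z and B = "PiE {..<d} K"] K
      by (simp add: Int_absorb1)
  qed
  ultimately show ?thesis
    unfolding score_def sum.distrib by simp
qed

lemma score_difference:
  assumes I: "I \<in> supports d n k" and J: "J \<in> supports d n k"
  shows "score d (\<lambda>i. chc_tensor d lam I i + Z i) J - score d (\<lambda>i. chc_tensor d lam I i + Z i) I
       = (\<Sum>i\<in>tidx d n. (indicator (PiE {..<d} J) i - indicator (PiE {..<d} I) i) * Z i)
         - lam * real (card (PiE {..<d} I - PiE {..<d} J))"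
proof -
  have "finite (PiE {..<d} I)"
    using supportsD(1)[OF I] finite_tidx finite_subset by blast
  then have "real (card (PiE {..<d} I))
      = real (card (PiE {..<d} I \<inter> PiE {..<d} J)) + real (card (PiE {..<d} I - PiE {..<d} J))"
    using card_Int_Diff by (metis of_nat_add)
  then show ?thesis
    unfolding score_signal_plus_noise[OF supportsD(1)[OF I]]
      score_signal_plus_noise[OF supportsD(1)[OF J]]
    by (simp add: left_diff_distrib sum_subtractf Int_commute distrib_left)
qed

section \<open>Probability that a competitor outscores the true support\<close>

definition misranking_event ::
  "nat \<Rightarrow> (nat \<Rightarrow> nat) \<Rightarrow> real \<Rightarrow> (nat \<Rightarrow> nat set) \<Rightarrow> (nat \<Rightarrow> nat set) \<Rightarrow> ((nat \<Rightarrow> nat) \<Rightarrow> real) set"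
where
  "misranking_event d n lam I J = {Z \<in> space (noise d n).
     score d (\<lambda>i. chc_tensor d lam I i + Z i) I \<le> score d (\<lambda>i. chc_tensor d lam I i + Z i) J}"

lemma borel_measurable_score:
  assumes "PiE {..<d} J \<subseteq> tidx d n"
  shows "(\<lambda>Z. score d (\<lambda>i. X i + Z i) J) \<in> borel_measurable (noise d n)"
  unfolding score_def noise_def using assms
  by (intro borel_measurable_sum borel_measurable_add borel_measurable_const
      borel_measurable_component_std_normal) auto

lemma sets_misranking_event:
  assumes "I \<in> supports d n k" "J \<in> supports d n k"
  shows "misranking_event d n lam I J \<in> sets (noise d n)"
  unfolding misranking_event_def
  using assms by (intro borel_measurable_le borel_measurable_score supportsD(1))

lemma success_prob_ge_union_bound:
  assumes "I \<in> supports d n k"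
  shows "1 - (\<Sum>J\<in>supports d n k - {I}. measure (noise d n) (misranking_event d n lam I J))
       \<le> success_prob d n k lam I"
proof -
  interpret prob_space "noise d n" by (rule prob_space_noise)
  let ?F = "\<Union>J\<in>supports d n k - {I}. misranking_event d n lam I J"
  have "?F \<in> events"
    by (rule sets.finite_UN) (auto simp: finite_supports intro: sets_misranking_event[OF assms])
  moreover have "recovery_event d n k lam I = space (noise d n) - ?F"
    unfolding recovery_event_def misranking_event_def by (auto simp: not_less)
  ultimately have "success_prob d n k lam I = 1 - prob ?F"
    unfolding success_prob_def by (simp add: prob_compl)
  moreover have "prob ?F \<le> (\<Sum>J\<in>supports d n k - {I}. prob (misranking_event d n lam I J))"
    by (rule finite_measure_subadditive_finite)
      (auto simp: finite_supports intro: sets_misranking_event[OF assms])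
  ultimately show ?thesis by simp
qed

lemma measure_misranking_event_le:
  assumes I: "I \<in> supports d n k" and J: "J \<in> supports d n k" and "0 \<le> lam"
  shows "measure (noise d n) (misranking_event d n lam I J)
       \<le> exp (- (lam\<^sup>2 * real (card (PiE {..<d} I - PiE {..<d} J))) / 4)"
proof -
  let ?BI = "PiE {..<d} I" and ?BJ = "PiE {..<d} J" and ?T = "tidx d n"
  let ?P = "PiM ?T (\<lambda>_. std_normal)"
  define b where "b i = (indicator ?BJ i - indicator ?BI i :: real)" for i
  define D where "D = real (card (?BI - ?BJ))"
  have sub: "?BI \<subseteq> ?T" "?BJ \<subseteq> ?T" using supportsD(1) I J by blast+
  then have fin: "finite ?BI" "finite ?BJ" using finite_tidx finite_subset by blast+
  have "score d (\<lambda>i. chc_tensor d lam I i + Z i) I \<le> score d (\<lambda>i. chc_tensor d lam I i + Z i) J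
      \<longleftrightarrow> lam * D \<le> (\<Sum>i\<in>?T. b i * Z i)" for Z
    using score_difference[OF I J, of lam Z] unfolding b_def D_def by linarith
  then have "misranking_event d n lam I J = {Z \<in> space ?P. lam * D \<le> (\<Sum>i\<in>?T. b i * Z i)}"
    unfolding misranking_event_def noise_def by simp
  moreover have "(\<Sum>i\<in>?T. (b i)\<^sup>2) = 2 * D"
  proof -
    have card_indicator: "(\<Sum>i\<in>?T. indicator B i :: real) = real (card B)" if "B \<subseteq> ?T" for B
      using that sum.inter_restrict[OF finite_tidx[of d n], of "\<lambda>_. 1 :: real" B]
      by (simp add: indicator_def of_bool_def Int_absorb1)
    have "card ?BI = card (?BI \<inter> ?BJ) + card (?BI - ?BJ)"
      "card ?BJ = card (?BJ \<inter> ?BI) + card (?BJ - ?BI)"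
      using fin card_Int_Diff by blast+
    moreover have "card ?BI = card ?BJ" using card_PiE_supports I J by metis
    ultimately have card_diff: "card (?BJ - ?BI) = card (?BI - ?BJ)" by (simp add: Int_commute)
    have "(b i)\<^sup>2 = indicator (?BJ - ?BI) i + indicator (?BI - ?BJ) i" for i
      unfolding b_def by (simp add: indicator_def)
    moreover have "?BJ - ?BI \<subseteq> ?T" "?BI - ?BJ \<subseteq> ?T" using sub by auto
    ultimately have "(\<Sum>i\<in>?T. (b i)\<^sup>2) = real (card (?BJ - ?BI)) + real (card (?BI - ?BJ))"
      by (simp add: sum.distrib card_indicator)
    then show ?thesis
      unfolding D_def using card_diff by simp
  qed
  moreover have "measure ?P {Z \<in> space ?P. lam * D \<le> (\<Sum>i\<in>?T. b i * Z i)}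
      \<le> exp ((lam / 2)\<^sup>2 / 2 * (\<Sum>i\<in>?T. (b i)\<^sup>2) - lam / 2 * (lam * D))"
    using \<open>0 \<le> lam\<close> by (intro measure_linear_form_ge_std_normal finite_tidx) simp
  ultimately show ?thesis
    unfolding noise_def D_def by (simp add: power2_eq_square field_simps)
qed

lemma measure_misranking_event_le_prod:
  assumes I: "I \<in> supports d n k" and J: "J \<in> supports d n k" and "0 < d" "0 \<le> lam"
    and M: "\<And>j. j < d \<Longrightarrow> M \<le> (\<Prod>z\<in>{..<d} - {j}. real (k z))"
  shows "measure (noise d n) (misranking_event d n lam I J)
       \<le> (\<Prod>j<d. exp (- (lam\<^sup>2 * M / (8 * real d))) ^ (2 * card (I j - J j)))"
proof -
  define D where "D = real (card (PiE {..<d} I - PiE {..<d} J))"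
  define a where "a = lam\<^sup>2 * M / (8 * real d)"
  define m where "m = (\<Sum>j<d. real (card (I j - J j)))"
  have "M * m = (\<Sum>j<d. real (card (I j - J j)) * M)"
    unfolding m_def by (simp add: sum_distrib_left mult.commute)
  also have "\<dots> \<le> (\<Sum>j<d. D)"
    unfolding D_def using M card_box_diff_ge[OF I J]
    by (intro sum_mono) (meson lessThan_iff mult_left_mono of_nat_0_le_iff order_trans)
  finally have "lam\<^sup>2 * (M * m) \<le> lam\<^sup>2 * (real d * D)"
    by (intro mult_left_mono) auto
  then have "exp (- (lam\<^sup>2 * D) / 4) \<le> exp (- a * (2 * m))"
    using \<open>0 < d\<close> unfolding a_def by (simp add: field_simps)
  also have "\<dots> = exp (\<Sum>j<d. real (2 * card (I j - J j)) * - a)"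
    unfolding m_def by (simp add: sum_distrib_left mult_ac)
  also have "\<dots> = (\<Prod>j<d. exp (- a) ^ (2 * card (I j - J j)))"
    by (simp add: exp_sum flip: exp_of_nat_mult)
  finally show ?thesis
    using measure_misranking_event_le[OF I J \<open>0 \<le> lam\<close>] unfolding D_def a_def
    by linarith
qed

section \<open>The recovery bound and the worst-case risk\<close>

lemma exp_minus_one_le: "exp u - 1 \<le> u * exp (u :: real)"
proof -
  have "(1 - u) * exp u \<le> exp (- u) * exp u"
    using exp_ge_add_one_self[of "- u"] by (intro mult_right_mono) auto
  then show ?thesis by (simp add: exp_minus algebra_simps)
qed

lemma prod_one_plus_power_minus_one_le:
  fixes y :: real and v :: "nat \<Rightarrow> real" and n :: "nat \<Rightarrow> nat"
  assumes "0 \<le> y"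
    and v: "\<And>j. j < d \<Longrightarrow> 1 \<le> v j \<and> real (n j) \<le> 2 * v j \<and> y \<le> 1 / (v j)\<^sup>2"
  shows "(\<Prod>j<d. (1 + y) ^ n j) - 1 \<le> 2 * exp (2 * real d) * (\<Sum>j<d. v j powr (- 1))"
proof -
  define u where "u = (\<Sum>j<d. real (n j) * y)"
  have "(\<Prod>j<d. (1 + y) ^ n j) \<le> (\<Prod>j<d. exp y ^ n j)"
    using \<open>0 \<le> y\<close> by (intro prod_mono conjI power_mono) auto
  also have "\<dots> = exp u"
    unfolding u_def by (simp add: exp_sum exp_of_nat_mult)
  finally have prod_le: "(\<Prod>j<d. (1 + y) ^ n j) \<le> exp u" .
  have term_le: "real (n j) * y \<le> 2 * v j powr (- 1)" if "j < d" for j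
  proof -
    have "real (n j) * y \<le> (2 * v j) * (1 / (v j)\<^sup>2)"
      using v[OF that] \<open>0 \<le> y\<close> by (intro mult_mono) auto
    then show ?thesis
      using v[OF that] by (simp add: powr_minus power2_eq_square field_simps)
  qed
  have u_le: "u \<le> 2 * (\<Sum>j<d. v j powr (- 1))"
    unfolding u_def sum_distrib_left by (intro sum_mono term_le) auto
  have "(\<Sum>j<d. v j powr (- 1)) \<le> (\<Sum>j<d. 1)"
  proof (rule sum_mono)
    fix j assume "j \<in> {..<d}"
    then have "1 \<le> v j" using v by auto
    then show "v j powr (- 1) \<le> 1" by (simp add: powr_minus inverse_le_1_iff)
  qed
  then have "exp u \<le> exp (2 * real d)"
    using u_le by simp
  moreover have "0 \<le> u"
    unfolding u_def using \<open>0 \<le> y\<close> by (intro sum_nonneg) auto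
  ultimately have "exp u - 1 \<le> 2 * (\<Sum>j<d. v j powr (- 1)) * exp (2 * real d)"
    using exp_minus_one_le[of u] u_le
    by (meson exp_gt_zero mult_mono less_imp_le order_trans)
  then show ?thesis
    using prod_le by (simp add: algebra_simps)
qed

lemma square_le_of_sqrt_threshold:
  fixes c L M lam :: real
  assumes "0 \<le> c" "0 \<le> L" "0 < M" "c * sqrt (L / M) \<le> lam"
  shows "c\<^sup>2 * L \<le> lam\<^sup>2 * M"
proof -
  have "(c * sqrt (L / M))\<^sup>2 \<le> lam\<^sup>2"
    using assms by (intro power_mono) auto
  then have "c\<^sup>2 * L / M \<le> lam\<^sup>2"
    using assms by (simp add: power_mult_distrib)
  then show ?thesis
    using assms by (simp add: divide_le_eq)
qed

lemma exp_threshold_le_inverse_square: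
  fixes L M lam v :: real
  assumes "0 < d" "1 \<le> v" "ln v \<le> L" "0 < M"
    and "4 * sqrt (real d) * sqrt (L / M) \<le> lam"
  shows "exp (- (lam\<^sup>2 * M / (8 * real d))) \<le> 1 / v\<^sup>2"
proof -
  have "0 \<le> L"
    using ln_ge_zero[OF assms(2)] assms(3) by linarith
  then have "(4 * sqrt (real d))\<^sup>2 * L \<le> lam\<^sup>2 * M"
    using assms by (intro square_le_of_sqrt_threshold) auto
  moreover have "16 * real d * ln v \<le> 16 * real d * L"
    using assms(3) by (intro mult_left_mono) auto
  ultimately have "16 * real d * ln v \<le> lam\<^sup>2 * M"
    by (simp add: power_mult_distrib)
  then have "2 * ln v \<le> lam\<^sup>2 * M / (8 * real d)"
    using \<open>0 < d\<close> by (simp add: field_simps)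
  then have "exp (- (lam\<^sup>2 * M / (8 * real d))) \<le> exp (- (2 * ln v))"
    by simp
  also have "\<dots> = 1 / v\<^sup>2"
    using assms(2) exp_of_nat_mult[of 2 "ln v"] by (simp add: exp_minus field_simps)
  finally show ?thesis .
qed

lemma recovery_bound:
  fixes n k :: "nat \<Rightarrow> nat"
  assumes "1 \<le> d"
    and kn: "\<forall>j<d. 1 \<le> k j \<and> real (k j) \<le> 1/2 * real (n j)"
    and threshold: "4 * sqrt (real d) * sqrt ((\<Sum>j<d. ln (real (n j) - real (k j))) /
                      Min ((\<lambda>j. \<Prod>z\<in>{..<d} - {j}. real (k z)) ` {..<d})) \<le> lam"
    and I: "I \<in> supports d n k" and "lam \<le> lam'"
  shows "1 - 2 * exp (2 * real d) * (\<Sum>j<d. (real (n j) - real (k j)) powr (- 1))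
       \<le> success_prob d n k lam' I"
proof -
  define L where "L = (\<Sum>j<d. ln (real (n j) - real (k j)))"
  define M where "M = Min ((\<lambda>j. \<Prod>z\<in>{..<d} - {j}. real (k z)) ` {..<d})"
  define y where "y = exp (- (lam'\<^sup>2 * M / (8 * real d)))"
  have gap: "1 \<le> real (n j) - real (k j) \<and> real (n j) \<le> 2 * (real (n j) - real (k j))"
    if "j < d" for j
    using kn that by force
  have M_le: "M \<le> (\<Prod>z\<in>{..<d} - {j}. real (k z))" if "j < d" for j
    unfolding M_def using that by (intro Min_le) auto
  have "M \<in> (\<lambda>j. \<Prod>z\<in>{..<d} - {j}. real (k z)) ` {..<d}"
    unfolding M_def using \<open>1 \<le> d\<close> by (intro Min_in) (auto simp: lessThan_empty_iff)
  then have "1 \<le> M"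
    using kn by (auto intro: prod_ge_1)
  have "0 \<le> L"
    unfolding L_def using gap by (intro sum_nonneg) auto
  then have "0 \<le> 4 * sqrt (real d) * sqrt (L / M)"
    using \<open>1 \<le> M\<close> by simp
  then have "0 \<le> lam'"
    using threshold \<open>lam \<le> lam'\<close> unfolding L_def[symmetric] M_def[symmetric] by linarith
  have "ln (real (n j) - real (k j)) \<le> L" if "j < d" for j
    unfolding L_def using gap that by (intro member_le_sum) auto
  then have y_le: "y \<le> 1 / (real (n j) - real (k j))\<^sup>2" if "j < d" for j
    unfolding y_def using gap[OF that] that \<open>1 \<le> d\<close> \<open>1 \<le> M\<close> threshold \<open>lam \<le> lam'\<close>
    by (intro exp_threshold_le_inverse_square[where L = L]) (auto simp: L_def M_def)
  have "1 - success_prob d n k lam' I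
      \<le> (\<Sum>J\<in>supports d n k - {I}. measure (noise d n) (misranking_event d n lam' I J))"
    using success_prob_ge_union_bound[OF I, of lam'] by simp
  also have "\<dots> \<le> (\<Sum>J\<in>supports d n k - {I}. \<Prod>j<d. y ^ (2 * card (I j - J j)))"
    unfolding y_def using \<open>1 \<le> d\<close> \<open>0 \<le> lam'\<close> M_le
    by (intro sum_mono measure_misranking_event_le_prod[OF I]) auto
  also have "\<dots> = (\<Sum>J\<in>supports d n k. \<Prod>j<d. y ^ (2 * card (I j - J j))) - 1"
    using finite_supports I by (simp add: sum_diff1)
  also have "\<dots> \<le> (\<Prod>j<d. (1 + y) ^ n j) - 1"
    using sum_supports_prod_power_le[OF I] by (simp add: y_def)
  also have "\<dots> \<le> 2 * exp (2 * real d) * (\<Sum>j<d. (real (n j) - real (k j)) powr (- 1))"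
    using gap y_le by (intro prod_one_plus_power_minus_one_le) (auto simp: y_def)
  finally show ?thesis by simp
qed

lemma chc_risk_bounds:
  assumes "\<forall>j<d. k j \<le> n j"
    and bound: "\<And>I l. I \<in> supports d n k \<Longrightarrow> lam \<le> l \<Longrightarrow> 1 - B \<le> success_prob d n k l I"
  shows "0 \<le> chc_risk d n k lam \<and> chc_risk d n k lam \<le> B"
proof -
  let ?S = "{(I, l). I \<in> supports d n k \<and> lam \<le> l}"
  let ?f = "\<lambda>p. 1 - success_prob d n k (snd p) (fst p)"
  have "restrict (\<lambda>j. {..<k j}) {..<d} \<in> supports d n k"
    unfolding supports_def using assms(1) by (auto simp: PiE_iff)
  then have witness: "(restrict (\<lambda>j. {..<k j}) {..<d}, lam) \<in> ?S" by simp
  have f_le: "?f p \<le> B" if p: "p \<in> ?S" for p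
  proof -
    obtain I l where "p = (I, l)" "I \<in> supports d n k" "lam \<le> l"
      using p by (cases p) auto
    then show ?thesis using bound[of I l] by simp
  qed
  have "0 \<le> ?f (restrict (\<lambda>j. {..<k j}) {..<d}, lam)"
    using prob_space.prob_le_1[OF prob_space_noise] unfolding success_prob_def by simp
  also have "\<dots> \<le> chc_risk d n k lam"
    unfolding chc_risk_def using witness f_le by (intro cSUP_upper bdd_aboveI2) auto
  finally show ?thesis
    unfolding chc_risk_def using witness f_le by (auto intro: cSUP_least)
qed

section \<open>Asymptotics in regime (A2)\<close>

lemma tendsto_ln_ln_over_ln:
  fixes f :: "nat \<Rightarrow> real"
  assumes f: "filterlim f at_top sequentially"
    and ratio: "((\<lambda>t. ln (f t) / ln (real t)) \<longlongrightarrow> 1) sequentially"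
  shows "((\<lambda>t. ln (ln (f t)) / ln (real t)) \<longlongrightarrow> 0) sequentially"
proof -
  have "((\<lambda>x::real. ln (ln x) / ln x) \<longlongrightarrow> 0) at_top"
    by real_asymp
  then have "((\<lambda>t. ln (ln (f t)) / ln (f t) * (ln (f t) / ln (real t))) \<longlongrightarrow> 0 * 1) sequentially"
    by (intro tendsto_mult ratio filterlim_compose[OF _ f])
  moreover have "eventually (\<lambda>t. 2 \<le> f t) sequentially"
    using f unfolding filterlim_at_top by blast
  then have "eventually (\<lambda>t. ln (ln (f t)) / ln (f t) * (ln (f t) / ln (real t))
      = ln (ln (f t)) / ln (real t)) sequentially"
    by eventually_elim simp
  ultimately show ?thesis
    using Lim_transform_eventually by fastforce
qed

lemma eventually_threshold:
  fixes K :: real and Ns ks :: "nat \<Rightarrow> nat"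
  assumes "0 < K" and "2 * \<beta> < real m * \<alpha>"
    and lams: "\<forall>t. 0 < lams t"
    and hN: "((\<lambda>t. ln (real (Ns t)) / ln (real t)) \<longlongrightarrow> 1) sequentially"
    and hk: "((\<lambda>t. ln (real (ks t)) / ln (real t)) \<longlongrightarrow> \<alpha>) sequentially"
    and hl: "((\<lambda>t. ln (1 / lams t) / ln (real t)) \<longlongrightarrow> \<beta>) sequentially"
    and N: "filterlim Ns at_top sequentially" and k: "filterlim ks at_top sequentially"
  shows "eventually (\<lambda>t. K * ln (real (Ns t)) \<le> (lams t)\<^sup>2 * real (ks t) ^ m) sequentially"
proof -
  define e where
    "e t = 2 * ln (lams t) + real m * ln (real (ks t)) - ln K - ln (ln (real (Ns t)))" for t
  have Nr: "filterlim (\<lambda>t. real (Ns t)) at_top sequentially"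
    by (rule filterlim_compose[OF filterlim_real_sequentially N])
  have lnt: "filterlim (\<lambda>t. ln (real t)) at_top sequentially"
    by (rule filterlim_compose[OF ln_at_top filterlim_real_sequentially])
  have "ln (lams t) / ln (real t) = - (ln (1 / lams t) / ln (real t))" for t
    using lams by (simp add: ln_div)
  then have "((\<lambda>t. ln (lams t) / ln (real t)) \<longlongrightarrow> - \<beta>) sequentially"
    using tendsto_minus[OF hl] by simp
  moreover have "((\<lambda>t. ln K / ln (real t)) \<longlongrightarrow> 0) sequentially"
    by (intro tendsto_divide_0[OF tendsto_const] filterlim_at_top_imp_at_infinity lnt)
  ultimately have "((\<lambda>t. 2 * (ln (lams t) / ln (real t)) + real m * (ln (real (ks t)) / ln (real t))
      - ln K / ln (real t) - ln (ln (real (Ns t))) / ln (real t))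
      \<longlongrightarrow> 2 * - \<beta> + real m * \<alpha> - 0 - 0) sequentially"
    by (intro tendsto_intros hk tendsto_ln_ln_over_ln[OF Nr hN])
  then have "((\<lambda>t. e t / ln (real t)) \<longlongrightarrow> real m * \<alpha> - 2 * \<beta>) sequentially"
    unfolding e_def by (simp add: diff_divide_distrib add_divide_distrib)
  then have "eventually (\<lambda>t. 0 < e t / ln (real t)) sequentially"
    by (rule order_tendstoD) (use assms(2) in linarith)
  moreover have "eventually (\<lambda>t. 0 < ln (real t)) sequentially"
    using lnt by (simp add: filterlim_at_top_dense)
  moreover have "eventually (\<lambda>t. 3 \<le> real (Ns t)) sequentially"
    using Nr unfolding filterlim_at_top by blast
  moreover have "eventually (\<lambda>t. 1 \<le> ks t) sequentially"
    using k unfolding filterlim_at_top by blast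
  ultimately show ?thesis
  proof eventually_elim
    case (elim t)
    then have "0 < e t" "0 < ln (real (Ns t))" "0 < real (ks t)" "0 < lams t"
      using lams by (auto simp: zero_less_divide_iff)
    then have "ln (K * ln (real (Ns t))) < ln ((lams t)\<^sup>2 * real (ks t) ^ m)"
      using \<open>0 < K\<close> unfolding e_def by (simp add: ln_mult ln_realpow)
    then show ?case
      using \<open>0 < K\<close> \<open>0 < ln (real (Ns t))\<close> \<open>0 < lams t\<close> \<open>0 < real (ks t)\<close>
      by (subst (asm) ln_less_cancel_iff) auto
  qed
qed

lemma threshold_equal_sizes:
  fixes N k :: nat
  assumes "1 \<le> d" "1 \<le> k" "1 \<le> real N - real k"
    and "16 * (real d)\<^sup>2 * ln (real N) \<le> lam\<^sup>2 * real k ^ (d - 1)" "0 \<le> lam"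
  shows "4 * sqrt (real d) * sqrt ((\<Sum>j<d. ln (real N - real k)) /
           Min ((\<lambda>j. \<Prod>z\<in>{..<d} - {j}. real k) ` {..<d})) \<le> lam"
proof -
  have "(\<lambda>j. \<Prod>z\<in>{..<d} - {j}. real k) ` {..<d} = {real k ^ (d - 1)}"
    using \<open>1 \<le> d\<close> by (auto simp: card_Diff_singleton image_constant_conv lessThan_empty_iff)
  moreover have "sqrt (16 :: real) = 4"
    by (simp add: real_sqrt_unique)
  ultimately have "4 * sqrt (real d) * sqrt ((\<Sum>j<d. ln (real N - real k)) /
      Min ((\<lambda>j. \<Prod>z\<in>{..<d} - {j}. real k) ` {..<d}))
      = sqrt (16 * real d * (real d * ln (real N - real k) / real k ^ (d - 1)))"
    by (simp add: real_sqrt_mult real_sqrt_divide)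
  also have "\<dots> \<le> lam"
  proof (rule real_le_lsqrt)
    have "ln (real N - real k) \<le> ln (real N)"
      using assms(3) by simp
    then have "16 * (real d)\<^sup>2 * ln (real N - real k) \<le> 16 * (real d)\<^sup>2 * ln (real N)"
      by (intro mult_left_mono) auto
    then have "16 * (real d)\<^sup>2 * ln (real N - real k) \<le> lam\<^sup>2 * real k ^ (d - 1)"
      using assms(4) by linarith
    then show "16 * real d * (real d * ln (real N - real k) / real k ^ (d - 1)) \<le> lam\<^sup>2"
      using \<open>1 \<le> k\<close> by (simp add: power2_eq_square field_simps)
  qed (use \<open>0 \<le> lam\<close> in auto)
  finally show ?thesis .
qed

lemma chc_risk_bounds_equal_sizes:
  fixes N K :: nat
  assumes "1 \<le> d" "1 \<le> K" "real K \<le> 1/2 * real N"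
    and "16 * (real d)\<^sup>2 * ln (real N) \<le> lam\<^sup>2 * real K ^ (d - 1)" "0 \<le> lam"
  shows "0 \<le> chc_risk d (\<lambda>_. N) (\<lambda>_. K) lam
    \<and> chc_risk d (\<lambda>_. N) (\<lambda>_. K) lam \<le> 2 * exp (2 * real d) * (\<Sum>j<d. (real N - real K) powr (- 1))"
proof (rule chc_risk_bounds)
  show "\<forall>j<d. K \<le> N"
    using assms(3) by simp
  have threshold: "4 * sqrt (real d) * sqrt ((\<Sum>j<d. ln (real N - real K)) /
      Min ((\<lambda>j. \<Prod>z\<in>{..<d} - {j}. real K) ` {..<d})) \<le> lam"
    using assms by (intro threshold_equal_sizes) simp_all
  have sizes: "\<forall>j<d. 1 \<le> K \<and> real K \<le> 1/2 * real N"
    using assms(2,3) by simp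
  fix I l
  assume "I \<in> supports d (\<lambda>_. N) (\<lambda>_. K)" "lam \<le> l"
  then show "1 - 2 * exp (2 * real d) * (\<Sum>j<d. (real N - real K) powr (- 1))
      \<le> success_prob d (\<lambda>_. N) (\<lambda>_. K) l I"
    using recovery_bound[OF \<open>1 \<le> d\<close> sizes threshold] by simp
qed

lemma chc_risk_tendsto_zero:
  fixes Ns ks :: "nat \<Rightarrow> nat"
  assumes "1 \<le> d" and "\<beta> < real (d - 1) * \<alpha> / 2"
    and lams: "\<forall>t. 0 < lams t"
    and hN: "((\<lambda>t. ln (real (Ns t)) / ln (real t)) \<longlongrightarrow> 1) sequentially"
    and hk: "((\<lambda>t. ln (real (ks t)) / ln (real t)) \<longlongrightarrow> \<alpha>) sequentially"
    and hl: "((\<lambda>t. ln (1 / lams t) / ln (real t)) \<longlongrightarrow> \<beta>) sequentially"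
    and N: "filterlim Ns at_top sequentially" and k: "filterlim ks at_top sequentially"
    and ratio: "((\<lambda>t. real (ks t) / real (Ns t)) \<longlongrightarrow> 0) sequentially"
  shows "((\<lambda>t. chc_risk d (\<lambda>_. Ns t) (\<lambda>_. ks t) (lams t)) \<longlongrightarrow> 0) sequentially"
proof -
  have Nr: "filterlim (\<lambda>t. real (Ns t)) at_top sequentially"
    by (rule filterlim_compose[OF filterlim_real_sequentially N])
  have "eventually (\<lambda>t. 1 \<le> ks t) sequentially"
    using k unfolding filterlim_at_top by blast
  moreover have half: "eventually (\<lambda>t. real (ks t) \<le> 1/2 * real (Ns t)) sequentially"
  proof -
    have "eventually (\<lambda>t. real (ks t) / real (Ns t) < 1/2) sequentially"
      using ratio by (rule order_tendstoD) simp
    moreover have "eventually (\<lambda>t. 1 \<le> real (Ns t)) sequentially"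
      using Nr unfolding filterlim_at_top by blast
    ultimately show ?thesis
      by eventually_elim (simp add: divide_less_eq)
  qed
  moreover have "eventually (\<lambda>t. 16 * (real d)\<^sup>2 * ln (real (Ns t))
      \<le> (lams t)\<^sup>2 * real (ks t) ^ (d - 1)) sequentially"
    using assms(2) \<open>1 \<le> d\<close> by (intro eventually_threshold[OF _ _ lams hN hk hl N k]) auto
  ultimately have risk: "eventually (\<lambda>t. 0 \<le> chc_risk d (\<lambda>_. Ns t) (\<lambda>_. ks t) (lams t)
      \<and> chc_risk d (\<lambda>_. Ns t) (\<lambda>_. ks t) (lams t)
        \<le> 2 * exp (2 * real d) * (\<Sum>j<d. (real (Ns t) - real (ks t)) powr (- 1))) sequentially"
  proof eventually_elim
    case (elim t)
    have "0 \<le> lams t"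
      using lams by (simp add: less_imp_le)
    then show ?case
      using chc_risk_bounds_equal_sizes[OF \<open>1 \<le> d\<close> elim] by simp
  qed
  have "eventually (\<lambda>t. 1/2 * real (Ns t) \<le> real (Ns t) - real (ks t)) sequentially"
    using half by eventually_elim simp
  moreover have "filterlim (\<lambda>t. 1/2 * real (Ns t)) at_top sequentially"
    by (intro filterlim_tendsto_pos_mult_at_top[OF tendsto_const _ Nr]) simp
  ultimately have "filterlim (\<lambda>t. real (Ns t) - real (ks t)) at_top sequentially"
    by (rule filterlim_at_top_mono[rotated])
  then have "((\<lambda>t. 2 * exp (2 * real d) * (real d * (real (Ns t) - real (ks t)) powr (- 1)))
      \<longlongrightarrow> 2 * exp (2 * real d) * (real d * 0)) sequentially"
    by (intro tendsto_mult tendsto_const tendsto_neg_powr) simp_all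
  then have "((\<lambda>t. 2 * exp (2 * real d) * (\<Sum>j<d. (real (Ns t) - real (ks t)) powr (- 1)))
      \<longlongrightarrow> 0) sequentially"
    by simp
  with risk show ?thesis
    by (auto intro: tendsto_sandwich[OF _ _ tendsto_const] elim: eventually_mono)
qed

theorem mainTheorem2:
  fixes d :: nat
  assumes "1 \<le> d"
  shows
   "(\<exists>C0>0. \<exists>c>0. \<exists>C>0. \<exists>N::nat. \<exists>\<epsilon>>0.
      \<forall>(n::nat \<Rightarrow> nat) (k::nat \<Rightarrow> nat) (lam::real).
        (\<forall>j<d. N \<le> k j \<and> real (k j) \<le> \<epsilon> * real (n j)) \<and>
        lam \<ge> C0 * sqrt ((\<Sum>j<d. ln (real (n j) - real (k j))) /
                         Min ((\<lambda>j. \<Prod>z\<in>{..<d} - {j}. real (k z)) ` {..<d}))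
        \<longrightarrow> (\<forall>I\<in>supports d n k. \<forall>lam'. lam \<le> lam' \<longrightarrow>
               success_prob d n k lam' I
                 \<ge> 1 - C * (\<Sum>j<d. (real (n j) - real (k j)) powr (- c))))
    \<and>
    (\<forall>(\<alpha>::real) (\<beta>::real) (Ns::nat \<Rightarrow> nat) (ks::nat \<Rightarrow> nat) (lams::nat \<Rightarrow> real).
       0 \<le> \<alpha> \<and> \<alpha> \<le> 1 \<and> \<beta> < real (d - 1) * \<alpha> / 2 \<and>
       (\<forall>t. 0 < lams t) \<and>
       ((\<lambda>t. ln (real (Ns t)) / ln (real t)) \<longlongrightarrow> 1) sequentially \<and>
       ((\<lambda>t. ln (real (ks t)) / ln (real t)) \<longlongrightarrow> \<alpha>) sequentially \<and>
       ((\<lambda>t. ln (1 / lams t) / ln (real t)) \<longlongrightarrow> \<beta>) sequentially \<and>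
       filterlim Ns at_top sequentially \<and>
       filterlim ks at_top sequentially \<and>
       ((\<lambda>t. real (ks t) / real (Ns t)) \<longlongrightarrow> 0) sequentially
       \<longrightarrow> ((\<lambda>t. chc_risk d (\<lambda>_. Ns t) (\<lambda>_. ks t) (lams t)) \<longlongrightarrow> 0) sequentially)"
proof -
  have recovery: "\<forall>(n::nat \<Rightarrow> nat) (k::nat \<Rightarrow> nat) (lam::real).
      (\<forall>j<d. 1 \<le> k j \<and> real (k j) \<le> 1/2 * real (n j)) \<and>
      lam \<ge> 4 * sqrt (real d) * sqrt ((\<Sum>j<d. ln (real (n j) - real (k j))) /
                         Min ((\<lambda>j. \<Prod>z\<in>{..<d} - {j}. real (k z)) ` {..<d}))
      \<longrightarrow> (\<forall>I\<in>supports d n k. \<forall>lam'. lam \<le> lam' \<longrightarrow>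
             success_prob d n k lam' I
               \<ge> 1 - 2 * exp (2 * real d) * (\<Sum>j<d. (real (n j) - real (k j)) powr (- 1)))"
    by (intro allI impI ballI, elim conjE) (rule recovery_bound[OF assms])
  have constants: "0 < 4 * sqrt (real d)" "0 < 2 * exp (2 * real d)" "(0::real) < 1" "(0::real) < 1/2"
    using assms by auto
  show ?thesis
    apply (intro conjI)
    subgoal using recovery constants by blast
    subgoal by (intro allI impI, elim conjE) (rule chc_risk_tendsto_zero[OF assms])
    done
qed

end
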